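(* Let $n\ge1$, let $a_1,\dots,a_n$ be distinct real numbers and $F(a)=\prod_{i=1}^n(a-a_i)$. Fix $\epsilon_i\in\{\pm1\}$, put $\Delta_i=\epsilon_i(a-a_i)$ and work on an open interval where all $\Delta_i>0$. For arbitrary real $\xi_1,\dots,\xi_n$, the function $x=\sum_{i=1}^n\xi_i\Delta_i^{-1/2}$ satisfies $$\mathrm{Op}_n[F]\,x=\sum_{i=1}^n\xi_i\frac{\Delta_i^{1/2}}{n!}\,D_a^n\Big(\frac{F}{\Delta_i}\Big),$$ which vanishes; consequently $x=\sum_{i}\xi_i\Delta_i^{-1/2}$ is the general solution of the ODE $\mathrm{Op}_n[F]x=0$.
   Context: $D_a=d/da$, $F^{(m)}=D_a^mF$; Pochhammer symbol $(z)_0=1$, $(z)_s=z(z+1)\cdots(z+s-1)$; $\mathrm{Op}_n[F]=\sum_{s=0}^n\frac{F^{(n-s)}}{(n-s)!}\frac{1}{(1/2)_s}D_a^s$. *)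

theory Defs
  imports "HOL-Analysis.Analysis"
begin

definition Dn :: "nat \<Rightarrow> (real \<Rightarrow> real) \<Rightarrow> real \<Rightarrow> real" where
  "Dn m f = (deriv ^^ m) f"

definition Op :: "nat \<Rightarrow> (real \<Rightarrow> real) \<Rightarrow> (real \<Rightarrow> real) \<Rightarrow> real \<Rightarrow> real" where
  "Op n F x t = (\<Sum>s=0..n. Dn (n - s) F t / fact (n - s) * (1 / pochhammer (1/2) s) * Dn s x t)"

end

theory Submission
  imports Defs "HOL-Computational_Algebra.Polynomial"
begin

text \<open>Write \<Delta> = e (u - c) with \<Delta> > 0. The k-th derivative of \<Delta> powr (-1/2) is
  (-1)^k (1/2)_k \<Delta> powr (-1/2) / (u - c)^k, so the Pochhammer factors of Op_n[F] cancel and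
  Op_n[F] \<Delta> powr (-1/2) becomes \<Delta> powr (-1/2) / (c - u)^n times the Taylor expansion of the
  degree-n polynomial F around u evaluated at c, i.e. a multiple of F(c) = 0 whenever c is a root
  of F. On the other side F / \<Delta> is a polynomial of degree n - 1, so its n-th derivative vanishes.
  Conversely, the n functions \<Delta>_i powr (-1/2) can match any initial values at a point, because the
  resulting linear system is a Vandermonde system in the distinct nodes 1 / (t - a_i); and since
  F does not vanish on the interval, a solution of Op_n[F] x = 0 is determined by its initial
  values (a Gronwall estimate for the energy of the associated first-order system).\<close>

lemma Dn_0 [simp]: "Dn 0 f = f"
  by (simp add: Dn_def)

lemma Dn_Suc: "Dn (Suc k) f = deriv (Dn k f)"
  by (simp add: Dn_def)

lemma Dn_poly: "Dn k (poly p) = poly ((pderiv ^^ k) p)"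
  by (induction k) (simp_all add: Dn_Suc DERIV_imp_deriv[OF poly_DERIV])

lemma Dn_cong_open:
  assumes "open S" "\<And>v. v \<in> S \<Longrightarrow> f v = g v" "u \<in> S"
  shows "Dn k f u = Dn k g u"
  using assms(3)
proof (induction k arbitrary: u)
  case (Suc k)
  have "eventually (\<lambda>v. Dn k f v = Dn k g v) (nhds u)"
    unfolding eventually_nhds using Suc assms(1) by blast
  then show ?case
    unfolding Dn_Suc by (rule deriv_cong_ev) simp
qed (use assms in simp)

lemma Dn_Suc_eqI:
  assumes "open S" "u \<in> S" "\<And>v. v \<in> S \<Longrightarrow> Dn k f v = h v"
    and "(h has_real_derivative h') (at u)"
  shows "Dn (Suc k) f u = h'"
proof -
  have "Dn (Suc k) f u = deriv h u"
    unfolding Dn_Suc using assms(1-3) by (intro deriv_cong_ev) (auto simp: eventually_nhds)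
  then show ?thesis
    using DERIV_imp_deriv[OF assms(4)] by simp
qed

lemma higher_pderiv_eq_0:
  fixes p :: "real poly"
  assumes "degree p < k"
  shows "(pderiv ^^ k) p = 0"
proof -
  obtain j where k: "k = Suc j"
    using assms by (cases k) auto
  have "degree ((pderiv ^^ j) p) = 0"
    using assms k by (simp add: degree_higher_pderiv)
  then show ?thesis
    unfolding k by (simp add: pderiv_eq_0_iff)
qed

lemma poly_taylor_expansion:
  fixes p :: "real poly"
  assumes "degree p \<le> n"
  shows "poly p x = (\<Sum>m\<le>n. Dn m (poly p) c / fact m * (x - c) ^ m)"
proof (cases "x = c")
  case True
  then show ?thesis
    by (simp add: sum.atMost_shift del: sum.atMost_Suc)
next
  case False
  have "\<forall>m t. m < Suc n \<and> min x c \<le> t \<and> t \<le> max x c \<longrightarrow>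
          (Dn m (poly p) has_real_derivative Dn (Suc m) (poly p) t) (at t)"
    by (simp add: Dn_poly)
  then obtain t where "poly p x = (\<Sum>m<Suc n. Dn m (poly p) c / fact m * (x - c) ^ m)
        + Dn (Suc n) (poly p) t / fact (Suc n) * (x - c) ^ Suc n"
    using Taylor[of "Suc n" "\<lambda>m. Dn m (poly p)" "poly p" "min x c" "max x c" c x] False
    by auto
  moreover have "Dn (Suc n) (poly p) t = 0"
    using assms by (simp add: Dn_poly higher_pderiv_eq_0 del: funpow.simps)
  ultimately show ?thesis
    by (simp add: lessThan_Suc_atMost)
qed

text \<open>The k-th derivative of u \<mapsto> (e (u - c)) powr (-1/2), wherever e (u - c) > 0.\<close>
definition rsqrt_deriv :: "real \<Rightarrow> real \<Rightarrow> nat \<Rightarrow> real \<Rightarrow> real" where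
  "rsqrt_deriv e c k u = (-1) ^ k * pochhammer (1/2) k * (e * (u - c)) powr (-1/2) / (u - c) ^ k"

lemma rsqrt_deriv_0 [simp]: "rsqrt_deriv e c 0 u = (e * (u - c)) powr (-1/2)"
  by (simp add: rsqrt_deriv_def)

lemma has_real_derivative_rsqrt:
  assumes "e * (u - c) > 0"
  shows "((\<lambda>u. (e * (u - c)) powr (-1/2)) has_real_derivative
           -(1/2) * (e * (u - c)) powr (-1/2) / (u - c)) (at u)"
proof -
  define g where "g = (e * (u - c)) powr (-1/2)"
  have nz: "e \<noteq> 0" "u - c \<noteq> 0"
    using assms by auto
  have "((\<lambda>u. (e * (u - c)) powr (-1/2)) has_real_derivative
          (-1/2) * (e * (u - c)) powr (-1/2 - 1) * e) (at u)"
    using assms by (auto intro!: derivative_eq_intros)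
  also have "(e * (u - c)) powr (-1/2 - 1) = g / (e * (u - c))"
    unfolding g_def using assms by (subst powr_diff) auto
  also have "(-1/2) * (g / (e * (u - c))) * e = -(1/2) * g / (u - c)"
    using nz by (simp add: field_simps)
  finally show ?thesis
    unfolding g_def .
qed

lemma has_real_derivative_rsqrt_deriv:
  assumes "e * (u - c) > 0"
  shows "(rsqrt_deriv e c k has_real_derivative rsqrt_deriv e c (Suc k) u) (at u)"
proof -
  define A :: real where "A = (-1) ^ k * pochhammer (1/2) k"
  define g where "g = (e * (u - c)) powr (-1/2)"
  have nz: "u - c \<noteq> 0"
    using assms by auto
  have "rsqrt_deriv e c k = (\<lambda>u. A * ((e * (u - c)) powr (-1/2) / (u - c) ^ k))"
    by (simp add: rsqrt_deriv_def A_def fun_eq_iff)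
  moreover have "((\<lambda>u. A * ((e * (u - c)) powr (-1/2) / (u - c) ^ k)) has_real_derivative
     A * ((-(1/2) * g / (u - c) * (u - c) ^ k - g * (of_nat k * (u - c) ^ (k - 1)))
       / ((u - c) ^ k * (u - c) ^ k))) (at u)"
    unfolding g_def using nz
    by (intro DERIV_cmult DERIV_divide has_real_derivative_rsqrt assms)
       (auto intro!: derivative_eq_intros)
  moreover have "A * ((-(1/2) * g / (u - c) * (u - c) ^ k - g * (of_nat k * (u - c) ^ (k - 1)))
       / ((u - c) ^ k * (u - c) ^ k)) = rsqrt_deriv e c (Suc k) u"
  proof -
    define d where "d = u - c"
    have "d \<noteq> 0"
      using nz by (simp add: d_def)
    moreover have "(e * d) powr (-1/2) = g"
      by (simp add: g_def d_def)
    ultimately show ?thesis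
      unfolding rsqrt_deriv_def A_def pochhammer_Suc d_def[symmetric]
      by (cases k) (simp_all add: field_simps)
  qed
  ultimately show ?thesis
    by simp
qed

lemma Dn_sum_rsqrt:
  assumes "open S" "finite A" "\<And>i u. i \<in> A \<Longrightarrow> u \<in> S \<Longrightarrow> e i * (u - c i) > 0" "u \<in> S"
  shows "Dn k (\<lambda>u. \<Sum>i\<in>A. \<xi> i * (e i * (u - c i)) powr (-1/2)) u
           = (\<Sum>i\<in>A. \<xi> i * rsqrt_deriv (e i) (c i) k u)"
  using assms(4)
proof (induction k arbitrary: u)
  case (Suc k)
  have D: "((\<lambda>u. \<Sum>i\<in>A. \<xi> i * rsqrt_deriv (e i) (c i) k u) has_real_derivative
          (\<Sum>i\<in>A. \<xi> i * rsqrt_deriv (e i) (c i) (Suc k) u)) (at u)"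
    using assms Suc.prems by (auto intro!: DERIV_sum DERIV_cmult has_real_derivative_rsqrt_deriv)
  show ?case
    by (rule Dn_Suc_eqI[OF assms(1) Suc.prems _ D]) (rule Suc.IH)
qed simp

definition Op_coeff :: "nat \<Rightarrow> (real \<Rightarrow> real) \<Rightarrow> nat \<Rightarrow> real \<Rightarrow> real" where
  "Op_coeff n F s t = Dn (n - s) F t / fact (n - s) * (1 / pochhammer (1/2) s)"

lemma Op_eq_sum_Op_coeff: "Op n F x t = (\<Sum>s=0..n. Op_coeff n F s t * Dn s x t)"
  by (simp add: Op_def Op_coeff_def)

text \<open>Up to the factor (e (t - c)) powr (-1/2) / (c - t) ^ n, the sum below is the Taylor expansion
  of p at t evaluated at c, hence equals p(c) = 0.\<close>
lemma Op_coeff_rsqrt_deriv_eq_0: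
  fixes p :: "real poly"
  assumes "degree p \<le> n" "poly p c = 0" "t \<noteq> c"
  shows "(\<Sum>s=0..n. Op_coeff n (poly p) s t * rsqrt_deriv e c s t) = 0"
proof -
  define G where "G = (e * (t - c)) powr (-1/2) / (c - t) ^ n"
  define D where "D m = Dn m (poly p) t / fact m * (c - t) ^ m" for m
  have summand: "Op_coeff n (poly p) s t * rsqrt_deriv e c s t = G * D (n - s)" if "s \<le> n" for s
  proof -
    have "(c - t) ^ n = (c - t) ^ s * (c - t) ^ (n - s)"
      using that by (simp flip: power_add)
    moreover have "(c - t) ^ s = (-1) ^ s * (t - c) ^ s"
      by (simp flip: power_minus)
    moreover have "pochhammer (1/2::real) s \<noteq> 0" "c - t \<noteq> 0"
      using pochhammer_pos[of "1/2::real" s] assms(3) by auto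
    ultimately show ?thesis
      unfolding Op_coeff_def rsqrt_deriv_def G_def D_def by (simp add: field_simps)
  qed
  have "(\<Sum>s=0..n. Op_coeff n (poly p) s t * rsqrt_deriv e c s t) = G * (\<Sum>s=0..n. D (n - s))"
    by (simp add: summand sum_distrib_left)
  also have "(\<Sum>s=0..n. D (n - s)) = (\<Sum>m\<le>n. D m)"
    by (subst sum.atLeastAtMost_rev) (simp add: atLeast0AtMost)
  also have "\<dots> = poly p c"
    unfolding D_def by (rule poly_taylor_expansion[OF assms(1), symmetric])
  finally show ?thesis
    using assms(2) by simp
qed

lemma lagrange_basis_exists:
  fixes z :: "'b \<Rightarrow> 'a::field"
  assumes "finite A" "inj_on z A"
  obtains L where "\<And>i. i \<in> A \<Longrightarrow> degree (L i) < card A"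
    and "\<And>i j. i \<in> A \<Longrightarrow> j \<in> A \<Longrightarrow> poly (L i) (z j) = (if i = j then 1 else 0)"
proof
  define L where "L i = smult (1 / (\<Prod>j\<in>A-{i}. z i - z j)) (\<Prod>j\<in>A-{i}. [:- z j, 1:])" for i
  show "degree (L i) < card A" if "i \<in> A" for i
  proof -
    have "degree (L i) \<le> degree (\<Prod>j\<in>A-{i}. [:- z j, 1:])"
      unfolding L_def by (rule degree_smult_le)
    also have "\<dots> \<le> sum (degree \<circ> (\<lambda>j. [:- z j, 1:])) (A-{i})"
      using assms by (intro degree_prod_sum_le) simp
    also have "\<dots> = card A - 1"
      using assms that by simp
    finally have "degree (L i) \<le> card A - 1" .
    moreover have "card A > 0"
      using assms(1) that card_gt_0_iff by blast
    ultimately show ?thesis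
      by linarith
  qed
  show "poly (L i) (z j) = (if i = j then 1 else 0)" if "i \<in> A" "j \<in> A" for i j
  proof (cases "i = j")
    case True
    have "(\<Prod>k\<in>A-{i}. z i - z k) \<noteq> 0"
      using assms that by (auto simp: inj_on_def)
    then show ?thesis
      using True by (simp add: L_def poly_prod)
  next
    case False
    have "(\<Prod>k\<in>A-{i}. poly [:- z k, 1:] (z j)) = 0"
      using assms that False by (intro prod_zero) auto
    then show ?thesis
      using False by (simp add: L_def poly_prod)
  qed
qed

lemma lagrange_interpolation:
  fixes z :: "'b \<Rightarrow> 'a::field"
  assumes "finite A" "inj_on z A" "degree q < card A"
    and "\<And>i. i \<in> A \<Longrightarrow> degree (L i) < card A"
    and "\<And>i j. i \<in> A \<Longrightarrow> j \<in> A \<Longrightarrow> poly (L i) (z j) = (if i = j then 1 else 0)"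
  shows "q = (\<Sum>i\<in>A. smult (poly q (z i)) (L i))"
proof (rule poly_eqI_degree[where A = "z ` A"])
  fix x assume "x \<in> z ` A"
  then obtain j where j: "j \<in> A" "x = z j"
    by auto
  have "poly (\<Sum>i\<in>A. smult (poly q (z i)) (L i)) x = (\<Sum>i\<in>A. if i = j then poly q (z i) else 0)"
    using j assms(5) by (auto simp: poly_sum intro: sum.cong)
  then show "poly q x = poly (\<Sum>i\<in>A. smult (poly q (z i)) (L i)) x"
    using assms(1) j by simp
next
  show "degree q < card (z ` A)"
    using assms by (simp add: card_image)
  have "degree (\<Sum>i\<in>A. smult (poly q (z i)) (L i)) < card A"
    using assms by (intro degree_sum_less) (auto intro: le_less_trans[OF degree_smult_le])
  then show "degree (\<Sum>i\<in>A. smult (poly q (z i)) (L i)) < card (z ` A)"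
    using assms by (simp add: card_image)
qed

lemma vandermonde_solvable:
  fixes z :: "'b \<Rightarrow> 'a::field" and w :: "nat \<Rightarrow> 'a"
  assumes "finite A" "inj_on z A"
  shows "\<exists>\<xi>. \<forall>m < card A. (\<Sum>i\<in>A. \<xi> i * z i ^ m) = w m"
proof -
  obtain L where L: "\<And>i. i \<in> A \<Longrightarrow> degree (L i) < card A"
    "\<And>i j. i \<in> A \<Longrightarrow> j \<in> A \<Longrightarrow> poly (L i) (z j) = (if i = j then 1 else 0)"
    using lagrange_basis_exists[OF assms] by blast
  define \<xi> where "\<xi> i = (\<Sum>k<card A. w k * coeff (L i) k)" for i
  have "(\<Sum>i\<in>A. \<xi> i * z i ^ m) = w m" if m: "m < card A" for m
  proof -
    have monom: "monom 1 m = (\<Sum>i\<in>A. smult (z i ^ m) (L i))"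
      using lagrange_interpolation[OF assms _ L, of "monom 1 m"] m
      by (simp add: degree_monom_eq poly_monom)
    have "(\<Sum>i\<in>A. \<xi> i * z i ^ m) = (\<Sum>k<card A. w k * (\<Sum>i\<in>A. z i ^ m * coeff (L i) k))"
      unfolding \<xi>_def sum_distrib_right sum_distrib_left
      by (subst sum.swap) (simp add: mult_ac)
    also have "\<dots> = (\<Sum>k<card A. w k * coeff (monom 1 m) k)"
      by (subst monom) (simp add: coeff_sum)
    also have "\<dots> = w m"
      using m by (simp add: coeff_monom if_distrib sum.delta cong: if_cong)
    finally show ?thesis .
  qed
  then show ?thesis
    by blast
qed

lemma energy_derivative_bound:
  fixes v \<beta> :: "nat \<Rightarrow> real"
  assumes rec: "v n = (\<Sum>s<n. \<beta> s * v s)" and M: "(\<Sum>s<n. \<bar>\<beta> s\<bar>) \<le> M"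
  shows "\<bar>\<Sum>k<n. 2 * v k * v (Suc k)\<bar> \<le> real n * (2 + 2 * M) * (\<Sum>k<n. (v k)\<^sup>2)"
proof -
  define E where "E = (\<Sum>k<n. (v k)\<^sup>2)"
  have "0 \<le> M"
    using M by (meson order.trans sum_nonneg abs_ge_zero)
  have "0 \<le> E"
    unfolding E_def by (simp add: sum_nonneg)
  have grow: "2 * E \<le> (2 + 2 * M) * E" "M * (2 * E) \<le> (2 + 2 * M) * E"
    using \<open>0 \<le> M\<close> \<open>0 \<le> E\<close> by (simp_all add: algebra_simps)
  have sq_le: "(v k)\<^sup>2 \<le> E" if "k < n" for k
    unfolding E_def using that by (intro member_le_sum) auto
  have pair: "\<bar>2 * v k * v j\<bar> \<le> 2 * E" if "k < n" "j < n" for k j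
  proof -
    have "\<bar>2 * v k * v j\<bar> = 2 * \<bar>v k\<bar> * \<bar>v j\<bar>"
      by (simp add: abs_mult)
    also have "\<dots> \<le> (v k)\<^sup>2 + (v j)\<^sup>2"
      using sum_squares_bound[of "\<bar>v k\<bar>" "\<bar>v j\<bar>"] by simp
    finally show ?thesis
      using sq_le[OF that(1)] sq_le[OF that(2)] by linarith
  qed
  have summand: "\<bar>2 * v k * v (Suc k)\<bar> \<le> (2 + 2 * M) * E" if k: "k < n" for k
  proof (cases "Suc k < n")
    case True
    then show ?thesis
      using pair[OF k True] grow(1) by linarith
  next
    case False
    then have "Suc k = n"
      using k by simp
    then have "\<bar>2 * v k * v (Suc k)\<bar> = \<bar>\<Sum>s<n. \<beta> s * (2 * v k * v s)\<bar>"
      by (simp add: rec sum_distrib_left mult_ac)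
    also have "\<dots> \<le> (\<Sum>s<n. \<bar>\<beta> s\<bar> * (2 * E))"
      using pair[OF k] by (auto intro!: order.trans[OF sum_abs] sum_mono simp: abs_mult mult_left_mono)
    also have "\<dots> \<le> M * (2 * E)"
      using M \<open>0 \<le> E\<close> by (simp add: sum_distrib_right[symmetric] mult_right_mono)
    finally show ?thesis
      using grow(2) by linarith
  qed
  have "\<bar>\<Sum>k<n. 2 * v k * v (Suc k)\<bar> \<le> (\<Sum>k<n. \<bar>2 * v k * v (Suc k)\<bar>)"
    by (rule sum_abs)
  also have "\<dots> \<le> (\<Sum>k<n. (2 + 2 * M) * E)"
    using summand by (intro sum_mono) auto
  finally show ?thesis
    by (simp add: E_def)
qed

lemma gronwall_forward_nonpos:
  fixes E E' :: "real \<Rightarrow> real"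
  assumes "t\<^sub>0 \<le> t\<^sub>1" and "\<And>u. t\<^sub>0 \<le> u \<Longrightarrow> u \<le> t\<^sub>1 \<Longrightarrow> (E has_real_derivative E' u) (at u)"
    and "\<And>u. t\<^sub>0 \<le> u \<Longrightarrow> u \<le> t\<^sub>1 \<Longrightarrow> E' u \<le> C * E u" and "E t\<^sub>0 = 0"
  shows "E t\<^sub>1 \<le> 0"
proof -
  define f where "f u = E u * exp (- C * (u - t\<^sub>0))" for u
  have "f t\<^sub>1 \<le> f t\<^sub>0"
  proof (rule DERIV_nonpos_imp_nonincreasing[OF assms(1)])
    fix u assume u: "t\<^sub>0 \<le> u" "u \<le> t\<^sub>1"
    have "(f has_real_derivative (E' u - C * E u) * exp (- C * (u - t\<^sub>0))) (at u)"
      unfolding f_def[abs_def] using assms(2)[OF u]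
      by (auto intro!: derivative_eq_intros simp: algebra_simps)
    moreover have "(E' u - C * E u) * exp (- C * (u - t\<^sub>0)) \<le> 0"
      using assms(3)[OF u] by (simp add: mult_nonpos_nonneg)
    ultimately show "\<exists>y. (f has_real_derivative y) (at u) \<and> y \<le> 0"
      by blast
  qed
  then show ?thesis
    using assms(4) by (simp add: f_def mult_le_0_iff)
qed

text \<open>The backward direction is the forward one applied to u \<mapsto> E (- u).\<close>
lemma gronwall_nonpos:
  fixes E E' :: "real \<Rightarrow> real"
  assumes "\<And>u. u \<in> {min t\<^sub>0 t\<^sub>1..max t\<^sub>0 t\<^sub>1} \<Longrightarrow> (E has_real_derivative E' u) (at u)"
    and "\<And>u. u \<in> {min t\<^sub>0 t\<^sub>1..max t\<^sub>0 t\<^sub>1} \<Longrightarrow> \<bar>E' u\<bar> \<le> C * E u" and "E t\<^sub>0 = 0"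
  shows "E t\<^sub>1 \<le> 0"
proof (cases "t\<^sub>0 \<le> t\<^sub>1")
  case True
  then show ?thesis
    using assms by (intro gronwall_forward_nonpos[of t\<^sub>0 t\<^sub>1 E E' C]) (auto simp: abs_le_iff)
next
  case False
  have "(\<lambda>u. E (- u)) (- t\<^sub>1) \<le> 0"
  proof (rule gronwall_forward_nonpos[of "- t\<^sub>0" "- t\<^sub>1" _ "\<lambda>u. - E' (- u)" C])
    fix u assume "- t\<^sub>0 \<le> u" "u \<le> - t\<^sub>1"
    then have u: "- u \<in> {min t\<^sub>0 t\<^sub>1..max t\<^sub>0 t\<^sub>1}"
      using False by auto
    show "((\<lambda>u. E (- u)) has_real_derivative - E' (- u)) (at u)"
      using assms(1)[OF u] DERIV_mirror[where f = E and x = u and y = "E' (- u)"] by simp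
    show "- E' (- u) \<le> C * E (- u)"
      using assms(2)[OF u] by (simp add: abs_le_iff)
  qed (use False assms(3) in auto)
  then show ?thesis
    by simp
qed

text \<open>Uniqueness for a scalar linear ODE of order n with continuous coefficients and non-vanishing
  leading coefficient, written as a first-order system for y 0, \<dots>, y (n - 1): the energy, i.e. the sum
  of their squares, is controlled by Gronwall's inequality.\<close>
lemma linear_ode_zero_initial_values:
  fixes y c :: "nat \<Rightarrow> real \<Rightarrow> real" and t\<^sub>0 t\<^sub>1 :: real
  defines "K \<equiv> {min t\<^sub>0 t\<^sub>1..max t\<^sub>0 t\<^sub>1}"
  assumes "n > 0"
    and der: "\<And>k u. k < n \<Longrightarrow> u \<in> K \<Longrightarrow> (y k has_real_derivative y (Suc k) u) (at u)"
    and cont: "\<And>s. s \<le> n \<Longrightarrow> continuous_on K (c s)"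
    and lead: "\<And>u. u \<in> K \<Longrightarrow> c n u \<noteq> 0"
    and ode: "\<And>u. u \<in> K \<Longrightarrow> (\<Sum>s=0..n. c s u * y s u) = 0"
    and init: "\<And>k. k < n \<Longrightarrow> y k t\<^sub>0 = 0"
  shows "y 0 t\<^sub>1 = 0"
proof -
  define b where "b s u = - c s u / c n u" for s u
  have "continuous_on K (\<lambda>u. \<Sum>s<n. \<bar>b s u\<bar>)"
    unfolding b_def using cont lead by (intro continuous_intros) auto
  then have "bounded ((\<lambda>u. \<Sum>s<n. \<bar>b s u\<bar>) ` K)"
    unfolding K_def by (intro compact_imp_bounded compact_continuous_image) auto
  then obtain M where M: "\<And>u. u \<in> K \<Longrightarrow> (\<Sum>s<n. \<bar>b s u\<bar>) \<le> M"
    unfolding bounded_iff by force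
  have rec: "y n u = (\<Sum>s<n. b s u * y s u)" if "u \<in> K" for u
  proof -
    have "{0..n} = insert n {..<n}"
      by auto
    then have "c n u * y n u + (\<Sum>s<n. c s u * y s u) = 0"
      using ode[OF that] by simp
    then have "y n u = - (\<Sum>s<n. c s u * y s u) / c n u"
      using lead[OF that] by (simp add: field_simps)
    then show ?thesis
      by (simp add: b_def sum_divide_distrib sum_negf)
  qed
  define E where "E u = (\<Sum>k<n. (y k u)\<^sup>2)" for u
  define E' where "E' u = (\<Sum>k<n. 2 * y k u * y (Suc k) u)" for u
  have "E t\<^sub>1 \<le> 0"
  proof (rule gronwall_nonpos[of t\<^sub>0 t\<^sub>1 E E' "real n * (2 + 2 * M)"])
    fix u assume u: "u \<in> {min t\<^sub>0 t\<^sub>1..max t\<^sub>0 t\<^sub>1}"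
    then show "(E has_real_derivative E' u) (at u)"
      unfolding E_def[abs_def] E'_def using der[of _ u]
      by (auto intro!: derivative_eq_intros DERIV_sum simp: K_def)
    show "\<bar>E' u\<bar> \<le> real n * (2 + 2 * M) * E u"
      unfolding E_def E'_def
      by (rule energy_derivative_bound[OF rec M]) (use u in \<open>simp_all add: K_def\<close>)
  qed (simp add: E_def init)
  moreover have "(y 0 t\<^sub>1)\<^sup>2 \<le> E t\<^sub>1"
    unfolding E_def using \<open>n > 0\<close> by (intro member_le_sum) auto
  ultimately have "(y 0 t\<^sub>1)\<^sup>2 \<le> 0"
    by linarith
  then show ?thesis
    by simp
qed

lemma poly_prod_linear:
  fixes a :: "'b \<Rightarrow> 'a::comm_ring_1"
  shows "(\<lambda>u. \<Prod>j\<in>A. u - a j) = poly (\<Prod>j\<in>A. [:- a j, 1:])"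
  unfolding poly_prod by (intro ext prod.cong) simp_all

lemma degree_prod_linear_le:
  fixes a :: "'b \<Rightarrow> 'a::field"
  assumes "finite A"
  shows "degree (\<Prod>j\<in>A. [:- a j, 1:]) \<le> card A"
  using degree_prod_sum_le[OF assms, of "\<lambda>j. [:- a j, 1:]"] by simp

lemma Op_coeff_sum_rsqrt_deriv_eq_0:
  fixes a e \<xi> :: "'b \<Rightarrow> real"
  assumes "finite A" "\<And>i. i \<in> A \<Longrightarrow> t \<noteq> a i"
  shows "(\<Sum>s=0..card A. Op_coeff (card A) (\<lambda>u. \<Prod>j\<in>A. u - a j) s t
            * (\<Sum>i\<in>A. \<xi> i * rsqrt_deriv (e i) (a i) s t)) = 0"
proof -
  have "(\<Sum>s=0..card A. Op_coeff (card A) (\<lambda>u. \<Prod>j\<in>A. u - a j) s t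
            * (\<Sum>i\<in>A. \<xi> i * rsqrt_deriv (e i) (a i) s t))
      = (\<Sum>i\<in>A. \<xi> i * (\<Sum>s=0..card A. Op_coeff (card A) (poly (\<Prod>j\<in>A. [:- a j, 1:])) s t
            * rsqrt_deriv (e i) (a i) s t))"
    unfolding poly_prod_linear sum_distrib_left sum_distrib_right
    by (subst sum.swap) (simp add: mult_ac)
  also have "\<dots> = 0"
  proof (intro sum.neutral ballI)
    fix i assume "i \<in> A"
    then have "poly (\<Prod>j\<in>A. [:- a j, 1:]) (a i) = 0"
      using assms(1) by (auto simp: poly_prod prod_zero_iff)
    then show "\<xi> i * (\<Sum>s=0..card A. Op_coeff (card A) (poly (\<Prod>j\<in>A. [:- a j, 1:])) s t
            * rsqrt_deriv (e i) (a i) s t) = 0"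
      using Op_coeff_rsqrt_deriv_eq_0[OF degree_prod_linear_le[OF assms(1)] _ assms(2)[OF \<open>i \<in> A\<close>]]
      by simp
  qed
  finally show ?thesis .
qed

lemma Op_sum_rsqrt_eq_0:
  fixes a e \<xi> :: "'b \<Rightarrow> real"
  assumes "open S" "finite A" "\<And>i u. i \<in> A \<Longrightarrow> u \<in> S \<Longrightarrow> e i * (u - a i) > 0" "t \<in> S"
  shows "Op (card A) (\<lambda>u. \<Prod>j\<in>A. u - a j)
           (\<lambda>u. \<Sum>i\<in>A. \<xi> i * (e i * (u - a i)) powr (-1/2)) t = 0"
proof -
  have "t \<noteq> a i" if "i \<in> A" for i
    using assms(3)[OF that assms(4)] by auto
  then show ?thesis
    unfolding Op_eq_sum_Op_coeff
    using Dn_sum_rsqrt[OF assms(1-4)] Op_coeff_sum_rsqrt_deriv_eq_0[OF assms(2)] by simp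
qed

lemma Dn_prod_div_linear_eq_0:
  fixes a :: "'b \<Rightarrow> real"
  assumes "finite A" "i \<in> A" "t \<noteq> a i"
  shows "Dn (card A) (\<lambda>u. (\<Prod>j\<in>A. u - a j) / (e * (u - a i))) t = 0"
proof -
  define Q where "Q = smult (1 / e) (\<Prod>j\<in>A-{i}. [:- a j, 1:])"
  have "(\<Prod>j\<in>A. u - a j) / (e * (u - a i)) = poly Q u" if "u \<in> - {a i}" for u
    using assms that by (simp add: Q_def poly_prod prod.remove)
  then have "Dn (card A) (\<lambda>u. (\<Prod>j\<in>A. u - a j) / (e * (u - a i))) t = Dn (card A) (poly Q) t"
    using assms(3) by (intro Dn_cong_open[where S = "- {a i}"]) auto
  moreover have "degree Q < card A"
  proof -
    have "degree Q \<le> degree (\<Prod>j\<in>A-{i}. [:- a j, 1:])"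
      unfolding Q_def by (rule degree_smult_le)
    also have "\<dots> \<le> card (A - {i})"
      using assms(1) by (intro degree_prod_linear_le) simp
    finally have "degree Q \<le> card A - 1"
      using assms(1,2) by simp
    moreover have "card A > 0"
      using assms(1,2) card_gt_0_iff by blast
    ultimately show ?thesis
      by linarith
  qed
  ultimately show ?thesis
    by (simp add: Dn_poly higher_pderiv_eq_0)
qed

text \<open>At a point t0, rsqrt_deriv e c k t0 is a nonzero multiple (independent of c) of
  (e (t0 - c)) powr (-1/2) \<cdot> (1 / (t0 - c)) ^ k, so matching initial values is a Vandermonde
  system in the distinct nodes 1 / (t0 - a i).\<close>
lemma rsqrt_sum_initial_values:
  fixes a e :: "'b \<Rightarrow> real" and w :: "nat \<Rightarrow> real"
  assumes "finite A" "inj_on a A" "\<And>i. i \<in> A \<Longrightarrow> e i * (t0 - a i) > 0"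
  shows "\<exists>\<xi>. \<forall>k < card A. (\<Sum>i\<in>A. \<xi> i * rsqrt_deriv (e i) (a i) k t0) = w k"
proof -
  define g where "g i = (e i * (t0 - a i)) powr (-1/2)" for i
  define z where "z i = 1 / (t0 - a i)" for i
  define \<kappa> :: "nat \<Rightarrow> real" where "\<kappa> k = (-1) ^ k * pochhammer (1/2) k" for k
  have nz: "t0 - a i \<noteq> 0" "g i \<noteq> 0" if "i \<in> A" for i
    using assms(3)[OF that] by (auto simp: g_def)
  have "inj_on z A"
    using assms(2) nz(1) by (auto simp: inj_on_def z_def)
  then obtain \<eta> where \<eta>: "\<And>k. k < card A \<Longrightarrow> (\<Sum>i\<in>A. \<eta> i * z i ^ k) = w k / \<kappa> k"
    using vandermonde_solvable[OF assms(1), of z "\<lambda>k. w k / \<kappa> k"] by auto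
  have "\<kappa> k \<noteq> 0" for k
    using pochhammer_pos[of "1/2::real" k] by (simp add: \<kappa>_def)
  have "\<forall>k < card A. (\<Sum>i\<in>A. \<eta> i / g i * rsqrt_deriv (e i) (a i) k t0) = w k"
  proof (intro allI impI)
    fix k assume "k < card A"
    have "(\<Sum>i\<in>A. \<eta> i / g i * rsqrt_deriv (e i) (a i) k t0) = \<kappa> k * (\<Sum>i\<in>A. \<eta> i * z i ^ k)"
      unfolding sum_distrib_left
      using nz by (intro sum.cong) (simp_all add: rsqrt_deriv_def g_def z_def \<kappa>_def power_one_over)
    then show "(\<Sum>i\<in>A. \<eta> i / g i * rsqrt_deriv (e i) (a i) k t0) = w k"
      using \<eta>[OF \<open>k < card A\<close>] \<open>\<kappa> k \<noteq> 0\<close> by simp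
  qed
  then show ?thesis
    by (intro exI[of _ "\<lambda>i. \<eta> i / g i"])
qed

lemma Op_kernel_eq_rsqrt_span:
  fixes A :: "'b set" and a e :: "'b \<Rightarrow> real" and x :: "real \<Rightarrow> real" and lo hi :: real
  defines "n \<equiv> card A" and "F \<equiv> \<lambda>u. \<Prod>j\<in>A. u - a j"
  assumes "finite A" "A \<noteq> {}" "inj_on a A"
    and pos: "\<And>i t. i \<in> A \<Longrightarrow> t \<in> {lo<..<hi} \<Longrightarrow> e i * (t - a i) > 0"
    and der: "\<And>k t. k < n \<Longrightarrow> t \<in> {lo<..<hi} \<Longrightarrow> (Dn k x has_real_derivative Dn (Suc k) x t) (at t)"
    and ode: "\<And>t. t \<in> {lo<..<hi} \<Longrightarrow> Op n F x t = 0"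
  shows "\<exists>\<xi>. \<forall>t\<in>{lo<..<hi}. x t = (\<Sum>i\<in>A. \<xi> i * (e i * (t - a i)) powr (-1/2))"
proof (cases "lo < hi")
  case True
  define t0 where "t0 = (lo + hi) / 2"
  have t0: "t0 \<in> {lo<..<hi}"
    using True by (simp add: t0_def)
  obtain \<xi> where \<xi>: "\<And>k. k < n \<Longrightarrow> (\<Sum>i\<in>A. \<xi> i * rsqrt_deriv (e i) (a i) k t0) = Dn k x t0"
    using rsqrt_sum_initial_values[OF assms(3,5) pos[OF _ t0], of "\<lambda>k. Dn k x t0"]
    unfolding n_def by auto
  define y where "y k u = Dn k x u - (\<Sum>i\<in>A. \<xi> i * rsqrt_deriv (e i) (a i) k u)" for k u
  have "y 0 t = 0" if t: "t \<in> {lo<..<hi}" for t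
  proof (rule linear_ode_zero_initial_values
      [where c = "Op_coeff n F" and n = n and y = y and t\<^sub>0 = t0 and t\<^sub>1 = t])
    have I: "u \<in> {lo<..<hi}" if "u \<in> {min t0 t..max t0 t}" for u
      using that t0 t by auto
    have ne: "u \<noteq> a i" if "i \<in> A" "u \<in> {lo<..<hi}" for i u
      using pos[OF that] by auto
    show "n > 0"
      using assms(3,4) by (simp add: n_def card_gt_0_iff)
    show "(y k has_real_derivative y (Suc k) u) (at u)"
      if "k < n" "u \<in> {min t0 t..max t0 t}" for k u
      unfolding y_def[abs_def] using der[OF that(1) I[OF that(2)]] pos[OF _ I[OF that(2)]]
      by (auto intro!: DERIV_diff DERIV_sum DERIV_cmult has_real_derivative_rsqrt_deriv)
    show "continuous_on {min t0 t..max t0 t} (Op_coeff n F s)" for s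
      unfolding Op_coeff_def[abs_def] F_def poly_prod_linear Dn_poly
      by (intro continuous_intros) simp
    show "Op_coeff n F n u \<noteq> 0" if "u \<in> {min t0 t..max t0 t}" for u
      using ne[OF _ I[OF that]] assms(3) pochhammer_pos[of "1/2::real" n]
      by (simp add: Op_coeff_def F_def)
    show "(\<Sum>s=0..n. Op_coeff n F s u * y s u) = 0" if "u \<in> {min t0 t..max t0 t}" for u
      using ode[OF I[OF that]]
        Op_coeff_sum_rsqrt_deriv_eq_0[OF assms(3) ne[OF _ I[OF that]], where \<xi> = \<xi> and e = e]
      unfolding y_def Op_eq_sum_Op_coeff n_def F_def
      by (simp add: right_diff_distrib sum_subtractf)
    show "y k t0 = 0" if "k < n" for k
      using \<xi>[OF that] by (simp add: y_def)
  qed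
  then show ?thesis
    by (auto simp: y_def)
qed simp

theorem proposition6:
  fixes n :: nat and a \<epsilon> :: "nat \<Rightarrow> real" and lo hi :: real
  assumes "n \<ge> 1"
    and "inj_on a {1..n}"
    and "\<forall>i\<in>{1..n}. \<epsilon> i = 1 \<or> \<epsilon> i = -1"
    and "\<forall>t\<in>{lo<..<hi}. \<forall>i\<in>{1..n}. \<epsilon> i * (t - a i) > 0"
  shows
    "(\<forall>\<xi> :: nat \<Rightarrow> real. \<forall>t\<in>{lo<..<hi}.
        Op n (\<lambda>u. \<Prod>j=1..n. u - a j)
             (\<lambda>u. \<Sum>i=1..n. \<xi> i * (\<epsilon> i * (u - a i)) powr (-1/2)) t
      = (\<Sum>i=1..n. \<xi> i * (\<epsilon> i * (t - a i)) powr (1/2) / fact n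
            * Dn n (\<lambda>u. (\<Prod>j=1..n. u - a j) / (\<epsilon> i * (u - a i))) t))
  \<and> (\<forall>\<xi> :: nat \<Rightarrow> real. \<forall>t\<in>{lo<..<hi}.
        (\<Sum>i=1..n. \<xi> i * (\<epsilon> i * (t - a i)) powr (1/2) / fact n
            * Dn n (\<lambda>u. (\<Prod>j=1..n. u - a j) / (\<epsilon> i * (u - a i))) t) = 0)
  \<and> (\<forall>x :: real \<Rightarrow> real.
        (\<forall>k<n. \<forall>t\<in>{lo<..<hi}. (Dn k x has_real_derivative Dn (Suc k) x t) (at t))
      \<and> (\<forall>t\<in>{lo<..<hi}. Op n (\<lambda>u. \<Prod>j=1..n. u - a j) x t = 0)
      \<longrightarrow> (\<exists>\<xi> :: nat \<Rightarrow> real. \<forall>t\<in>{lo<..<hi}.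
             x t = (\<Sum>i=1..n. \<xi> i * (\<epsilon> i * (t - a i)) powr (-1/2))))"
proof -
  have card: "card {1..n} = n"
    by simp
  have ne: "t \<noteq> a i" if "i \<in> {1..n}" "t \<in> {lo<..<hi}" for i t
    using assms(4) that by fastforce
  have kernel: "Op n (\<lambda>u. \<Prod>j=1..n. u - a j)
      (\<lambda>u. \<Sum>i=1..n. \<xi> i * (\<epsilon> i * (u - a i)) powr (-1/2)) t = 0" if "t \<in> {lo<..<hi}" for \<xi> t
    using Op_sum_rsqrt_eq_0[where S = "{lo<..<hi}" and A = "{1..n}" and e = \<epsilon> and a = a and \<xi> = \<xi>]
      assms(4) that
    by (simp add: card)
  have rhs: "(\<Sum>i=1..n. \<xi> i * (\<epsilon> i * (t - a i)) powr (1/2) / fact n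
      * Dn n (\<lambda>u. (\<Prod>j=1..n. u - a j) / (\<epsilon> i * (u - a i))) t) = 0" if "t \<in> {lo<..<hi}" for \<xi> t
    using Dn_prod_div_linear_eq_0[where A = "{1..n}" and a = a and t = t] ne[OF _ that]
    by (simp add: card)
  have span: "\<exists>\<xi>. \<forall>t\<in>{lo<..<hi}. x t = (\<Sum>i=1..n. \<xi> i * (\<epsilon> i * (t - a i)) powr (-1/2))"
    if "\<forall>k<n. \<forall>t\<in>{lo<..<hi}. (Dn k x has_real_derivative Dn (Suc k) x t) (at t)"
      and "\<forall>t\<in>{lo<..<hi}. Op n (\<lambda>u. \<Prod>j=1..n. u - a j) x t = 0" for x
    using Op_kernel_eq_rsqrt_span[where A = "{1..n}" and a = a and e = \<epsilon> and x = x]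
      assms(1,2,4) that
    by (simp add: card)
  show ?thesis
    using kernel rhs span by simp
qed

end
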